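(* For any $\bm f\in\mathscr{F}$, the function $x_{\bm f}$ is not differentiable at any point $t\in[0,1]$ at which $f_\infty$ is continuous and $f_\infty(t)\neq0$. In particular, $x_{\bm f}$ is not differentiable at almost every point of $\{f_\infty\neq0\}$.
   Context: Faber--Schauder functions: $e_{0,0}(t)=\max\{0,\min\{t,1-t\}\}$, $e_{n,k}(t)=2^{-n/2}e_{0,0}(2^nt-k)$ for $n\ge1$, $k=0,\dots,2^n-1$. $\mathscr{F}$ is the class of sequences $\bm f=(f_n)_{n\ge0}$ of bounded functions $f_n:[0,1]\to\mathbb{R}$ converging uniformly to a Riemann integrable function $f_\infty$. For $\bm f\in\mathscr{F}$, $x_{\bm f}:=\sum_{n=0}^\infty\sum_{k=0}^{2^n-1}f_n(k2^{-n})e_{n,k}$. *)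

theory Defs
  imports "HOL-Analysis.Analysis"
begin

definition e00 :: "real \<Rightarrow> real" where
  "e00 t = max 0 (min t (1 - t))"

definition schauder :: "nat \<Rightarrow> nat \<Rightarrow> real \<Rightarrow> real" where
  "schauder n k t = (if n = 0 then e00 t
                     else 2 powr (- real n / 2) * e00 (2 ^ n * t - real k))"

definition riemann_integrable :: "(real \<Rightarrow> real) \<Rightarrow> real \<Rightarrow> real \<Rightarrow> bool" where
  "riemann_integrable f a b \<longleftrightarrow>
     bounded (f ` {a..b}) \<and>
     (\<forall>\<epsilon>>0. \<exists>(m::nat) (x::nat \<Rightarrow> real).
        x 0 = a \<and> x m = b \<and> (\<forall>i<m. x i < x (Suc i)) \<and>
        (\<Sum>i<m. ((SUP s\<in>{x i..x (Suc i)}. f s) - (INF s\<in>{x i..x (Suc i)}. f s))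
                   * (x (Suc i) - x i)) < \<epsilon>)"

definition in_class_F :: "(nat \<Rightarrow> real \<Rightarrow> real) \<Rightarrow> (real \<Rightarrow> real) \<Rightarrow> bool" where
  "in_class_F f finf \<longleftrightarrow>
     (\<forall>n. bounded (f n ` {0..1})) \<and>
     uniform_limit {0..1} f finf sequentially \<and>
     riemann_integrable finf 0 1"

definition x_f :: "(nat \<Rightarrow> real \<Rightarrow> real) \<Rightarrow> real \<Rightarrow> real" where
  "x_f f t = (\<Sum>n. \<Sum>k<2 ^ n. f n (real k / 2 ^ n) * schauder n k t)"

end

theory Submission
  imports Defs
begin

text \<open>
  The level-\<open>N\<close> coefficients of \<open>x_f\<close> are recovered from second differences: on a dyadic
  interval \<open>[a, b]\<close> of length \<open>2^-N\<close> with midpoint \<open>m\<close>, the levels below \<open>N\<close> are affine and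
  the levels above \<open>N\<close> vanish at \<open>a\<close>, \<open>m\<close>, \<open>b\<close>, so
  \<open>x_f(m) - (x_f(a) + x_f(b))/2 = f\<^sub>N(a) 2^(-N/2) / 2\<close>.
  If \<open>x_f\<close> is differentiable at \<open>t\<close>, this second difference is \<open>o(2^-N)\<close> along the dyadic
  intervals containing \<open>t\<close>, hence \<open>f\<^sub>N(a\<^sub>N) \<rightarrow> 0\<close>; but uniform convergence and continuity of
  \<open>f\<^sub>\<infinity>\<close> at \<open>t\<close> give \<open>f\<^sub>N(a\<^sub>N) \<rightarrow> f\<^sub>\<infinity>(t)\<close>. The almost-everywhere statement follows from
  Lebesgue's criterion: a Riemann integrable function is continuous almost everywhere.
\<close>

section \<open>Second differences of the Faber--Schauder series\<close>

definition schauder_layer :: "(nat \<Rightarrow> real \<Rightarrow> real) \<Rightarrow> nat \<Rightarrow> real \<Rightarrow> real" where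
  "schauder_layer f n t = (\<Sum>k<2 ^ n. f n (real k / 2 ^ n) * schauder n k t)"

lemma x_f_eq_suminf_schauder_layer: "x_f f t = (\<Sum>n. schauder_layer f n t)"
  by (simp add: x_f_def schauder_layer_def)

lemma e00_of_int: "e00 (of_int z) = 0"
  by (cases "z \<le> 0") (auto simp: e00_def)

lemma schauder_eq_scaled:
  "k < 2 ^ n \<Longrightarrow> schauder n k t = 2 powr (- real n / 2) * e00 (2 ^ n * t - real k)"
  by (cases "n = 0") (auto simp: schauder_def)

lemma schauder_layer_grid_eq_0:
  assumes "2 ^ n * p = real_of_int z"
  shows "schauder_layer f n p = 0"
  unfolding schauder_layer_def
proof (rule sum.neutral, intro ballI)
  fix k assume "k \<in> {..<(2::nat) ^ n}"
  moreover have "e00 (2 ^ n * p - real k) = 0"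
    using assms e00_of_int[of "z - int k"] by simp
  ultimately show "f n (real k / 2 ^ n) * schauder n k p = 0"
    by (simp add: schauder_eq_scaled)
qed

lemma x_f_dyadic_eq_finite_sum:
  assumes "2 ^ M * p = real_of_int j"
  shows "x_f f p = (\<Sum>n<M. schauder_layer f n p)"
  unfolding x_f_eq_suminf_schauder_layer
proof (rule suminf_finite)
  fix n assume "n \<notin> {..<M}"
  then have "(2::real) ^ n * p = 2 ^ (n - M) * (2 ^ M * p)"
    by (simp flip: power_add)
  also have "\<dots> = real_of_int (2 ^ (n - M) * j)" using assms by simp
  finally show "schauder_layer f n p = 0" by (rule schauder_layer_grid_eq_0)
qed simp

lemma e00_midpoint:
  assumes "\<alpha> \<le> \<beta>"
    and "\<beta> \<le> 0 \<or> (0 \<le> \<alpha> \<and> \<beta> \<le> 1/2) \<or> (1/2 \<le> \<alpha> \<and> \<beta> \<le> 1) \<or> 1 \<le> \<alpha>"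
  shows "e00 ((\<alpha> + \<beta>) / 2) = (e00 \<alpha> + e00 \<beta>) / 2"
proof -
  have e00_cases: "e00 x = (if x \<le> 0 then 0 else if x \<le> 1/2 then x else if x \<le> 1 then 1 - x else 0)"
    for x :: real
    by (auto simp: e00_def max_def min_def)
  show ?thesis
    using assms by (auto simp: e00_cases field_simps)
qed

text \<open>For \<open>n < N\<close> the kinks of \<open>schauder n k'\<close> lie on the grid \<open>2^-(n+1) \<int>\<close>, so the function
  is affine on every dyadic interval of length \<open>2^-N\<close>.\<close>
lemma schauder_midpoint:
  assumes "n < N" "k' < 2 ^ n"
  shows "schauder n k' ((2 * real k + 1) / 2 ^ Suc N) =
     (schauder n k' (real k / 2 ^ N) + schauder n k' ((real k + 1) / 2 ^ N)) / 2"
proof -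
  define h :: nat where "h = 2 ^ (N - n - 1)"
  have h: "real h > 0" by (simp add: h_def)
  have "N = n + Suc (N - n - 1)" using assms by simp
  then have pow_N: "(2::real) ^ N = 2 ^ n * (2 * real h)"
    by (metis h_def power_add power_Suc of_nat_numeral of_nat_power)
  define i :: int where "i = int k - int k' * 2 * int h"
  define \<alpha> :: real where "\<alpha> = of_int i / (2 * real h)"
  define \<beta> :: real where "\<beta> = (of_int i + 1) / (2 * real h)"
  have left: "2 ^ n * (real k / 2 ^ N) - real k' = \<alpha>"
    and right: "2 ^ n * ((real k + 1) / 2 ^ N) - real k' = \<beta>"
    and mid: "2 ^ n * ((2 * real k + 1) / 2 ^ Suc N) - real k' = (\<alpha> + \<beta>) / 2"
    using h by (simp_all add: pow_N \<alpha>_def \<beta>_def i_def field_simps)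
  have le: "\<alpha> \<le> \<beta>" using h by (simp add: \<alpha>_def \<beta>_def divide_right_mono)
  moreover have pieces: "\<beta> \<le> 0 \<or> (0 \<le> \<alpha> \<and> \<beta> \<le> 1/2) \<or> (1/2 \<le> \<alpha> \<and> \<beta> \<le> 1) \<or> 1 \<le> \<alpha>"
  proof -
    consider "of_int i + 1 \<le> (0::real)" | "0 \<le> (of_int i :: real)" "of_int i + 1 \<le> real h"
      | "real h \<le> (of_int i :: real)" "of_int i + 1 \<le> 2 * real h" | "2 * real h \<le> (of_int i :: real)"
      by (cases "i \<le> -1"; cases "i \<le> int h - 1"; cases "i \<le> 2 * int h - 1") auto
    then show ?thesis
      by cases (use h in \<open>simp_all add: \<alpha>_def \<beta>_def field_simps\<close>)
  qed
  ultimately show ?thesis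
    unfolding schauder_eq_scaled[OF assms(2)] left right mid e00_midpoint[OF le pieces]
    by (simp add: algebra_simps)
qed

lemma schauder_layer_midpoint:
  assumes "n < N"
  shows "schauder_layer f n ((2 * real k + 1) / 2 ^ Suc N) =
     (schauder_layer f n (real k / 2 ^ N) + schauder_layer f n ((real k + 1) / 2 ^ N)) / 2"
proof -
  have "schauder_layer f n ((2 * real k + 1) / 2 ^ Suc N) = (\<Sum>k'<2 ^ n.
      (f n (real k' / 2 ^ n) * schauder n k' (real k / 2 ^ N)
     + f n (real k' / 2 ^ n) * schauder n k' ((real k + 1) / 2 ^ N)) / 2)"
    unfolding schauder_layer_def
    by (intro sum.cong refl, subst schauder_midpoint[OF assms]) (auto simp: algebra_simps)
  then show ?thesis
    unfolding schauder_layer_def by (simp only: sum_divide_distrib[symmetric] sum.distrib)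
qed

lemma schauder_layer_midpoint_top:
  assumes "k < 2 ^ N"
  shows "schauder_layer f N ((2 * real k + 1) / 2 ^ Suc N)
       = f N (real k / 2 ^ N) * 2 powr (- real N / 2) / 2"
proof -
  have e00_half: "e00 (of_int z + 1/2) = (if z = 0 then 1/2 else 0)" for z :: int
  proof -
    have "z \<noteq> 0 \<Longrightarrow> (1::real) \<le> of_int z \<or> of_int z \<le> (-1::real)" by linarith
    then show ?thesis by (auto simp: e00_def max_def min_def)
  qed
  have "e00 (2 ^ N * ((2 * real k + 1) / 2 ^ Suc N) - real k') = (if k' = k then 1/2 else 0)" for k'
  proof -
    have arg: "2 ^ N * ((2 * real k + 1) / 2 ^ Suc N) - real k' = of_int (int k - int k') + 1/2"
      by (simp add: field_simps)
    show ?thesis unfolding arg e00_half by simp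
  qed
  then have "schauder_layer f N ((2 * real k + 1) / 2 ^ Suc N)
       = (\<Sum>k'<2^N. if k' = k then f N (real k / 2 ^ N) * 2 powr (- real N / 2) / 2 else 0)"
    unfolding schauder_layer_def by (intro sum.cong) (auto simp: schauder_eq_scaled e00_half)
  also have "\<dots> = f N (real k / 2 ^ N) * 2 powr (- real N / 2) / 2" using assms by simp
  finally show ?thesis .
qed

theorem x_f_second_difference:
  assumes "k < 2 ^ N"
  shows "x_f f ((2 * real k + 1) / 2 ^ Suc N) - (x_f f (real k / 2 ^ N) + x_f f ((real k + 1) / 2 ^ N)) / 2
     = f N (real k / 2 ^ N) * 2 powr (- real N / 2) / 2"
proof -
  let ?a = "real k / 2 ^ N" and ?b = "(real k + 1) / 2 ^ N" and ?m = "(2 * real k + 1) / 2 ^ Suc N"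
  have grid: "2 ^ Suc N * ?m = real_of_int (2 * int k + 1)" "2 ^ Suc N * ?a = real_of_int (2 * int k)"
    "2 ^ Suc N * ?b = real_of_int (2 * int k + 2)"
    by (simp_all add: field_simps)
  have "x_f f ?m - (x_f f ?a + x_f f ?b) / 2
     = (\<Sum>n<Suc N. schauder_layer f n ?m - (schauder_layer f n ?a + schauder_layer f n ?b) / 2)"
    unfolding x_f_dyadic_eq_finite_sum[OF grid(1)] x_f_dyadic_eq_finite_sum[OF grid(2)] x_f_dyadic_eq_finite_sum[OF grid(3)]
    by (simp only: sum_subtractf sum.distrib sum_divide_distrib[symmetric])
  also have "\<dots> = schauder_layer f N ?m - (schauder_layer f N ?a + schauder_layer f N ?b) / 2"
  proof -
    have "(\<Sum>n<N. schauder_layer f n ?m - (schauder_layer f n ?a + schauder_layer f n ?b) / 2) = 0"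
      by (intro sum.neutral ballI, subst schauder_layer_midpoint) auto
    then show ?thesis by simp
  qed
  also have "\<dots> = f N ?a * 2 powr (- real N / 2) / 2"
    using schauder_layer_grid_eq_0[of N ?a "int k"] schauder_layer_grid_eq_0[of N ?b "int k + 1"]
    by (simp only: schauder_layer_midpoint_top[OF assms]) (simp add: field_simps)
  finally show ?thesis .
qed

section \<open>Non-differentiability at continuity points\<close>

lemma midpoint_second_difference_le:
  fixes g :: "real \<Rightarrow> real"
  assumes "g differentiable (at t within S)" and "c > 0"
  obtains d where "d > 0"
    and "\<And>a b. a \<le> t \<Longrightarrow> t \<le> b \<Longrightarrow> b - a < d \<Longrightarrow> {a..b} \<subseteq> S \<Longrightarrow>
           \<bar>g ((a + b) / 2) - (g a + g b) / 2\<bar> \<le> 2 * c * (b - a)"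
proof -
  obtain L where "(g has_derivative L) (at t within S)"
    using assms(1) by (auto simp: differentiable_def)
  then have "bounded_linear L"
    and der: "\<exists>d>0. \<forall>y\<in>S. norm (y - t) < d \<longrightarrow> norm (g y - g t - L (y - t)) \<le> c * norm (y - t)"
    using assms(2) unfolding has_derivative_within_alt by auto
  then obtain c0 where L: "L = (\<lambda>x. x * c0)" using real_bounded_linear by blast
  obtain d where "d > 0"
    and d: "\<And>y. y \<in> S \<Longrightarrow> \<bar>y - t\<bar> < d \<Longrightarrow> \<bar>g y - g t - (y - t) * c0\<bar> \<le> c * \<bar>y - t\<bar>"
    using der by (auto simp: L)
  moreover have "\<bar>g ((a + b) / 2) - (g a + g b) / 2\<bar> \<le> 2 * c * (b - a)"
    if "a \<le> t" "t \<le> b" "b - a < d" "{a..b} \<subseteq> S" for a b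
  proof -
    define E where "E y = g y - g t - (y - t) * c0" for y
    define m where "m = (a + b) / 2"
    define B where "B = c * (b - a)"
    have E: "\<bar>E y\<bar> \<le> B" if "a \<le> y" "y \<le> b" for y
    proof -
      have "\<bar>E y\<bar> \<le> c * \<bar>y - t\<bar>"
        unfolding E_def using d[of y] that \<open>a \<le> t\<close> \<open>t \<le> b\<close> \<open>b - a < d\<close> \<open>{a..b} \<subseteq> S\<close> by auto
      also have "\<dots> \<le> B"
        unfolding B_def using that \<open>a \<le> t\<close> \<open>t \<le> b\<close> \<open>c > 0\<close> by (intro mult_left_mono) auto
      finally show ?thesis .
    qed
    have "g m - (g a + g b) / 2 = E m - (E a + E b) / 2"
      by (simp add: E_def m_def field_simps)
    moreover have "a \<le> m" "m \<le> b" using that by (auto simp: m_def)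
    ultimately have "\<bar>g m - (g a + g b) / 2\<bar> \<le> 2 * B"
      using E[of a] E[of b] E[of m] that by (auto simp: abs_le_iff add_divide_distrib)
    then show ?thesis by (simp add: m_def B_def)
  qed
  ultimately show ?thesis using that by blast
qed

lemma dyadic_interval_containing:
  assumes "t \<in> {0..1::real}"
  obtains k where "k < 2 ^ N" "real k / 2 ^ N \<le> t" "t \<le> (real k + 1) / 2 ^ N"
proof (cases "t = 1")
  case True
  then show ?thesis
    using that[of "2 ^ N - 1"] by (simp add: of_nat_diff)
next
  case False
  with assms have t: "0 \<le> t" "t < 1" by auto
  define z where "z = \<lfloor>2 ^ N * t\<rfloor>"
  have z: "0 \<le> z" "of_int z \<le> 2 ^ N * t" "2 ^ N * t < of_int z + 1"
    using t unfolding z_def by (auto intro: of_int_floor_le real_of_int_floor_add_one_gt)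
  have "2 ^ N * t < 2 ^ N" using t by simp
  then have "of_int z < (2::real) ^ N" using z(2) by linarith
  then have "nat z < 2 ^ N" using z(1) by (simp add: nat_less_iff)
  then show ?thesis
    using that[of "nat z"] z by (simp add: field_simps)
qed

lemma dyadic_mesh_eventually_less:
  assumes "d > 0"
  shows "\<forall>\<^sub>F N in sequentially. 1 / 2 ^ N < (d::real)"
proof -
  have "(\<lambda>N. (1 / 2) ^ N :: real) \<longlonglongrightarrow> 0" by (rule LIMSEQ_realpow_zero) auto
  from order_tendstoD(2)[OF this assms] show ?thesis by (simp add: power_one_over)
qed

lemma two_powr_neg_half_squared: "2 powr (- real N / 2) * 2 powr (- real N / 2) = 1 / (2::real) ^ N"
proof -
  have "2 powr (- real N / 2) * 2 powr (- real N / 2) = (2::real) powr (- real N)"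
    by (subst powr_add[symmetric]) simp
  also have "\<dots> = 1 / 2 ^ N"
    by (simp add: powr_minus powr_realpow divide_inverse)
  finally show ?thesis .
qed

lemma x_f_differentiable_imp_coefficients_tendsto_0:
  assumes diff: "x_f f differentiable (at t within {0..1})"
    and kk: "\<And>N. kk N < 2 ^ N" "\<And>N. real (kk N) / 2 ^ N \<le> t" "\<And>N. t \<le> (real (kk N) + 1) / 2 ^ N"
  shows "(\<lambda>N. f N (real (kk N) / 2 ^ N)) \<longlonglongrightarrow> 0"
proof (rule tendstoI)
  fix e :: real assume "e > 0"
  then have "e / 8 > 0" by simp
  obtain d where "d > 0"
    and d: "\<And>a b. a \<le> t \<Longrightarrow> t \<le> b \<Longrightarrow> b - a < d \<Longrightarrow> {a..b} \<subseteq> {0..1} \<Longrightarrow>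
      \<bar>x_f f ((a + b) / 2) - (x_f f a + x_f f b) / 2\<bar> \<le> 2 * (e / 8) * (b - a)"
    using midpoint_second_difference_le[OF diff \<open>e / 8 > 0\<close>] by blast
  show "\<forall>\<^sub>F N in sequentially. dist (f N (real (kk N) / 2 ^ N)) 0 < e"
    using dyadic_mesh_eventually_less[OF \<open>d > 0\<close>]
  proof eventually_elim
    case (elim N)
    define a where "a = real (kk N) / 2 ^ N"
    define b where "b = (real (kk N) + 1) / 2 ^ N"
    define p :: real where "p = 2 powr (- real N / 2)"
    have pp: "p * p = 1 / 2 ^ N" unfolding p_def by (rule two_powr_neg_half_squared)
    have "p \<le> 2 powr 0" unfolding p_def by (intro powr_mono) auto
    then have p: "0 < p" "p \<le> 1" by (simp_all add: p_def)
    have "Suc (kk N) \<le> 2 ^ N" using kk(1)[of N] by simp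
    then have "real (kk N) + 1 \<le> 2 ^ N" by (metis of_nat_Suc of_nat_le_iff of_nat_numeral of_nat_power add.commute)
    then have "{a..b} \<subseteq> {0..1}" by (auto simp: a_def b_def field_simps)
    moreover have "b - a = p * p" by (simp add: pp a_def b_def field_simps)
    moreover have "a \<le> t" "t \<le> b" using kk(2,3)[of N] by (simp_all add: a_def b_def)
    ultimately have "\<bar>x_f f ((a + b) / 2) - (x_f f a + x_f f b) / 2\<bar> \<le> 2 * (e / 8) * (p * p)"
      using d[of a b] elim pp by simp
    moreover have "x_f f ((a + b) / 2) - (x_f f a + x_f f b) / 2 = f N a * p / 2"
    proof -
      have mid: "(a + b) / 2 = (2 * real (kk N) + 1) / 2 ^ Suc N"
        by (simp add: a_def b_def field_simps)
      show ?thesis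
        unfolding mid unfolding a_def b_def p_def by (rule x_f_second_difference[OF kk(1)])
    qed
    ultimately have "\<bar>f N a\<bar> * p \<le> (e / 2 * p) * p"
      using p by (simp add: abs_mult algebra_simps)
    then have "\<bar>f N a\<bar> \<le> e / 2 * p" using p by simp
    also have "\<dots> \<le> e / 2" using p \<open>e > 0\<close> by simp
    finally show ?case using \<open>e > 0\<close> by (simp add: a_def)
  qed
qed

lemma dyadic_left_endpoints_tendsto:
  assumes "\<And>N. real (kk N) / 2 ^ N \<le> t" "\<And>N. t \<le> (real (kk N) + 1) / 2 ^ N"
  shows "(\<lambda>N. real (kk N) / 2 ^ N) \<longlonglongrightarrow> t"
proof (rule tendsto_sandwich[OF _ _ _ tendsto_const])
  have "(\<lambda>N. t - (1 / 2) ^ N) \<longlonglongrightarrow> t - 0"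
    by (intro tendsto_diff tendsto_const LIMSEQ_realpow_zero) auto
  then show "(\<lambda>N. t - 1 / 2 ^ N) \<longlonglongrightarrow> t" by (simp add: power_one_over)
  show "\<forall>\<^sub>F N in sequentially. t - 1 / 2 ^ N \<le> real (kk N) / 2 ^ N"
    using assms(2) by (simp add: add_divide_distrib algebra_simps)
  show "\<forall>\<^sub>F N in sequentially. real (kk N) / 2 ^ N \<le> t"
    using assms(1) by simp
qed

lemma uniform_limit_tendsto_compose:
  fixes g :: "'a::t2_space \<Rightarrow> 'b::real_normed_vector"
  assumes "uniform_limit S f g F" "continuous (at t within S) g"
    and "(a \<longlongrightarrow> t) F" "\<forall>\<^sub>F n in F. a n \<in> S"
  shows "((\<lambda>n. f n (a n)) \<longlongrightarrow> g t) F"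
proof -
  have "((\<lambda>n. f n (a n) - g (a n)) \<longlongrightarrow> 0) F"
  proof (rule tendstoI)
    fix e :: real assume "e > 0"
    with assms(1) have "\<forall>\<^sub>F n in F. \<forall>x\<in>S. dist (f n x) (g x) < e"
      by (rule uniform_limitD)
    with assms(4) show "\<forall>\<^sub>F n in F. dist (f n (a n) - g (a n)) 0 < e"
      by eventually_elim (simp add: dist_norm)
  qed
  moreover have "((\<lambda>n. g (a n)) \<longlongrightarrow> g t) F"
    using assms(2,4,3) by (rule continuous_within_tendsto_compose)
  ultimately have "((\<lambda>n. (f n (a n) - g (a n)) + g (a n)) \<longlongrightarrow> 0 + g t) F"
    by (rule tendsto_add)
  then show ?thesis by simp
qed

theorem x_f_not_differentiable_at:
  assumes "in_class_F f finf" "t \<in> {0..1}"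
    and "continuous (at t within {0..1}) finf" "finf t \<noteq> 0"
  shows "\<not> x_f f differentiable (at t within {0..1})"
proof
  assume diff: "x_f f differentiable (at t within {0..1})"
  have "\<forall>N. \<exists>k. k < 2 ^ N \<and> real k / 2 ^ N \<le> t \<and> t \<le> (real k + 1) / 2 ^ N"
    using dyadic_interval_containing[OF assms(2)] by metis
  then obtain kk where kk: "\<And>N. kk N < 2 ^ N" "\<And>N. real (kk N) / 2 ^ N \<le> t"
    "\<And>N. t \<le> (real (kk N) + 1) / 2 ^ N"
    by metis
  have "uniform_limit {0..1} f finf sequentially"
    using assms(1) by (simp add: in_class_F_def)
  moreover have "\<forall>\<^sub>F N in sequentially. real (kk N) / 2 ^ N \<in> {0..1}"
    using less_imp_le[OF kk(1)] by simp
  ultimately have "(\<lambda>N. f N (real (kk N) / 2 ^ N)) \<longlonglongrightarrow> finf t"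
    using assms(3) dyadic_left_endpoints_tendsto[OF kk(2,3)] uniform_limit_tendsto_compose by blast
  moreover have "(\<lambda>N. f N (real (kk N) / 2 ^ N)) \<longlonglongrightarrow> 0"
    using x_f_differentiable_imp_coefficients_tendsto_0[OF diff kk] .
  ultimately show False
    using LIMSEQ_unique assms(4) by blast
qed

section \<open>Lebesgue's criterion for Riemann integrability\<close>

definition oscillation_on :: "('a \<Rightarrow> real) \<Rightarrow> 'a set \<Rightarrow> real" where
  "oscillation_on g A = (SUP s\<in>A. g s) - (INF s\<in>A. g s)"

lemma abs_diff_le_oscillation_on:
  assumes "bounded (g ` A)" "s \<in> A" "s' \<in> A"
  shows "\<bar>g s - g s'\<bar> \<le> oscillation_on g A"
proof -
  have "bdd_above (g ` A)" "bdd_below (g ` A)"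
    using assms(1) by (simp_all add: bounded_imp_bdd_above bounded_imp_bdd_below)
  then have "g s \<le> (SUP s\<in>A. g s)" "g s' \<le> (SUP s\<in>A. g s)"
    and "(INF s\<in>A. g s) \<le> g s" "(INF s\<in>A. g s) \<le> g s'"
    using assms(2,3) by (simp_all add: cSUP_upper cINF_lower)
  then show ?thesis unfolding oscillation_on_def by linarith
qed

definition large_oscillation_points :: "(real \<Rightarrow> real) \<Rightarrow> real \<Rightarrow> real set" where
  "large_oscillation_points g \<epsilon> =
     {t\<in>{0..1}. \<forall>\<delta>>0. \<exists>s\<in>{0..1}. \<bar>s - t\<bar> < \<delta> \<and> \<epsilon> \<le> \<bar>g s - g t\<bar>}"

lemma partition_cell_subset:
  fixes x :: "nat \<Rightarrow> real"
  assumes "\<forall>i<m. x i < x (Suc i)" "x 0 = 0" "x m = 1" "i < m"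
  shows "{x i..x (Suc i)} \<subseteq> {0..1}"
proof -
  have mono: "x j \<le> x k" if "j \<le> k" "k \<le> m" for j k
    by (rule lift_Suc_mono_le_ivl[where N = "{..<m}"]) (use assms(1) that in auto)
  show ?thesis
    using mono[of 0 i] mono[of "Suc i" m] assms(2-4) by auto
qed

lemma partition_cell_containing:
  fixes x :: "nat \<Rightarrow> real"
  assumes "\<forall>i<m. x i < x (Suc i)" "x 0 = 0" "x m = 1"
    and "t \<in> {0..1}" "t \<notin> x ` {..m}"
  obtains i where "i < m" "x i < t" "t < x (Suc i)"
proof -
  define J where "J = {i. i \<le> m \<and> x i < t}"
  define i where "i = Max J"
  have "finite J" by (simp add: J_def)
  moreover have "0 \<in> J" using assms(2,4,5) by (auto simp: J_def)
  ultimately have "i \<in> J" unfolding i_def by (intro Max_in) auto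
  have "Suc i \<notin> J"
    using Max_ge[OF \<open>finite J\<close>, of "Suc i"] by (auto simp: i_def)
  have "i < m" "x i < t"
    using \<open>i \<in> J\<close> assms(3,4) by (auto simp: J_def le_less)
  moreover have "t \<noteq> x (Suc i)" using assms(5) \<open>i < m\<close> by auto
  ultimately show ?thesis
    using that \<open>Suc i \<notin> J\<close> by (auto simp: J_def not_less)
qed

lemma large_oscillation_point_in_cell:
  fixes x :: "nat \<Rightarrow> real"
  assumes "bounded (g ` {0..1})" "\<forall>i<m. x i < x (Suc i)" "x 0 = 0" "x m = 1"
    and "t \<in> large_oscillation_points g \<epsilon>" "t \<notin> x ` {..m}"
  obtains i where "i < m" "\<epsilon> \<le> oscillation_on g {x i..x (Suc i)}" "t \<in> {x i..x (Suc i)}"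
proof -
  obtain i where i: "i < m" "x i < t" "t < x (Suc i)"
    using partition_cell_containing[OF assms(2-4) _ assms(6)] assms(5)
    by (auto simp: large_oscillation_points_def)
  define \<delta> where "\<delta> = min (t - x i) (x (Suc i) - t)"
  have "\<delta> > 0" using i by (simp add: \<delta>_def)
  then obtain s where "s \<in> {0..1}" "\<bar>s - t\<bar> < \<delta>" "\<epsilon> \<le> \<bar>g s - g t\<bar>"
    using assms(5) by (auto simp: large_oscillation_points_def)
  moreover have "s \<in> {x i..x (Suc i)}" "t \<in> {x i..x (Suc i)}"
    using i \<open>\<bar>s - t\<bar> < \<delta>\<close> by (auto simp: \<delta>_def abs_less_iff)
  moreover have "bounded (g ` {x i..x (Suc i)})"
    using assms(1) partition_cell_subset[OF assms(2-4) i(1)] by (meson bounded_subset image_mono)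
  ultimately have "\<epsilon> \<le> oscillation_on g {x i..x (Suc i)}"
    using abs_diff_le_oscillation_on by (meson order.trans)
  then show ?thesis using that i \<open>t \<in> {x i..x (Suc i)}\<close> by blast
qed

lemma measure_large_oscillation_cells_le:
  fixes x :: "nat \<Rightarrow> real"
  assumes "bounded (g ` {0..1})" "\<forall>i<m. x i < x (Suc i)" "x 0 = 0" "x m = 1" "\<epsilon> > 0"
  shows "measure lebesgue (\<Union>i\<in>{i. i < m \<and> \<epsilon> \<le> oscillation_on g {x i..x (Suc i)}}. {x i..x (Suc i)})
    \<le> (\<Sum>i<m. oscillation_on g {x i..x (Suc i)} * (x (Suc i) - x i)) / \<epsilon>"
proof -
  define I where "I = {i. i < m \<and> \<epsilon> \<le> oscillation_on g {x i..x (Suc i)}}"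
  have osc_nonneg: "0 \<le> oscillation_on g {x i..x (Suc i)}" if "i < m" for i
  proof -
    have "bounded (g ` {x i..x (Suc i)})"
      using assms(1) partition_cell_subset[OF assms(2-4) that] by (meson bounded_subset image_mono)
    then show ?thesis
      using abs_diff_le_oscillation_on[of g _ "x i" "x i"] assms(2) that by auto
  qed
  have "measure lebesgue (\<Union>i\<in>I. {x i..x (Suc i)}) \<le> (\<Sum>i\<in>I. measure lebesgue {x i..x (Suc i)})"
    by (intro measure_UNION_le) (auto simp: I_def)
  also have "\<dots> = (\<Sum>i\<in>I. x (Suc i) - x i)"
    using assms(2) by (intro sum.cong refl) (auto simp: I_def less_imp_le)
  also have "\<dots> \<le> (\<Sum>i\<in>I. oscillation_on g {x i..x (Suc i)} * (x (Suc i) - x i) / \<epsilon>)"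
  proof (rule sum_mono)
    fix i assume "i \<in> I"
    then have "\<epsilon> \<le> oscillation_on g {x i..x (Suc i)}" "x i < x (Suc i)"
      using assms(2) by (auto simp: I_def)
    then have "\<epsilon> * (x (Suc i) - x i) \<le> oscillation_on g {x i..x (Suc i)} * (x (Suc i) - x i)"
      by (intro mult_right_mono) auto
    then show "x (Suc i) - x i \<le> oscillation_on g {x i..x (Suc i)} * (x (Suc i) - x i) / \<epsilon>"
      using assms(5) by (simp add: field_simps)
  qed
  also have "\<dots> \<le> (\<Sum>i<m. oscillation_on g {x i..x (Suc i)} * (x (Suc i) - x i) / \<epsilon>)"
    using osc_nonneg assms(2,5)
    by (intro sum_mono2) (auto simp: I_def less_imp_le intro!: divide_nonneg_pos mult_nonneg_nonneg)
  finally show ?thesis by (simp add: I_def sum_divide_distrib)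
qed

text \<open>A partition with Darboux sum below \<open>\<epsilon> e\<close> covers the large oscillation points, up to its
  finitely many nodes, by cells of total length at most \<open>e\<close>.\<close>
lemma negligible_large_oscillation_points:
  assumes "riemann_integrable g 0 1" "\<epsilon> > 0"
  shows "negligible (large_oscillation_points g \<epsilon>)"
  unfolding negligible_outer_le
proof (intro allI impI)
  fix e :: real assume "e > 0"
  have bounded: "bounded (g ` {0..1})" using assms(1) by (simp add: riemann_integrable_def)
  obtain m x where x0: "x 0 = 0" and xm: "x m = 1" and inc: "\<forall>i<m. x i < x (Suc i)"
    and darboux: "(\<Sum>i<m. oscillation_on g {x i..x (Suc i)} * (x (Suc i) - x i)) < \<epsilon> * e"
    using assms \<open>e > 0\<close> unfolding riemann_integrable_def oscillation_on_def by (meson mult_pos_pos)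
  define C where "C = (\<Union>i\<in>{i. i < m \<and> \<epsilon> \<le> oscillation_on g {x i..x (Suc i)}}. {x i..x (Suc i)})"
  define T where "T = C \<union> x ` {..m}"
  have nodes: "negligible (x ` {..m})" by (simp add: negligible_finite)
  have C: "C \<in> lmeasurable" unfolding C_def by (intro fmeasurable.finite_UN) auto
  then have "T \<in> lmeasurable"
    unfolding T_def using negligible_imp_measurable[OF nodes] by (rule fmeasurable.Un)
  moreover have "measure lebesgue T \<le> e"
  proof -
    have "measure lebesgue T \<le> measure lebesgue C + measure lebesgue (x ` {..m})"
      unfolding T_def using C negligible_imp_measurable[OF nodes] by (intro measure_Un_le) auto
    also have "\<dots> \<le> (\<Sum>i<m. oscillation_on g {x i..x (Suc i)} * (x (Suc i) - x i)) / \<epsilon>"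
      using measure_large_oscillation_cells_le[OF bounded inc x0 xm assms(2)]
      by (simp add: C_def negligible_imp_measure0[OF nodes])
    also have "\<dots> \<le> e"
      using darboux assms(2) by (simp add: field_simps)
    finally show ?thesis .
  qed
  moreover have "large_oscillation_points g \<epsilon> \<subseteq> T"
  proof
    fix t assume t: "t \<in> large_oscillation_points g \<epsilon>"
    show "t \<in> T"
    proof (cases "t \<in> x ` {..m}")
      case False
      then obtain i where "i < m" "\<epsilon> \<le> oscillation_on g {x i..x (Suc i)}" "t \<in> {x i..x (Suc i)}"
        using large_oscillation_point_in_cell[OF bounded inc x0 xm t] by blast
      then show ?thesis by (auto simp: T_def C_def)
    qed (simp add: T_def)
  qed
  ultimately show "\<exists>T. large_oscillation_points g \<epsilon> \<subseteq> T \<and> T \<in> lmeasurable \<and> measure lebesgue T \<le> e"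
    by blast
qed

theorem riemann_integrable_discontinuities_negligible:
  assumes "riemann_integrable g 0 1"
  shows "negligible {t\<in>{0..1}. \<not> continuous (at t within {0..1}) g}"
proof (rule negligible_subset)
  show "negligible (\<Union>n. large_oscillation_points g (inverse (real (Suc n))))"
    using assms by (intro negligible_Union_nat negligible_large_oscillation_points) auto
  show "{t\<in>{0..1}. \<not> continuous (at t within {0..1}) g}
      \<subseteq> (\<Union>n. large_oscillation_points g (inverse (real (Suc n))))"
  proof
    fix t assume t: "t \<in> {t\<in>{0..1}. \<not> continuous (at t within {0..1}) g}"
    then obtain \<epsilon> where "\<epsilon> > 0"
      and jump: "\<forall>\<delta>>0. \<exists>s\<in>{0..1}. dist s t < \<delta> \<and> \<not> dist (g s) (g t) < \<epsilon>"
      unfolding continuous_within_eps_delta by auto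
    obtain n where "inverse (real (Suc n)) < \<epsilon>"
      using reals_Archimedean[OF \<open>\<epsilon> > 0\<close>] by blast
    then have "t \<in> large_oscillation_points g (inverse (real (Suc n)))"
      using t jump by (fastforce simp: large_oscillation_points_def dist_real_def)
    then show "t \<in> (\<Union>n. large_oscillation_points g (inverse (real (Suc n))))" by blast
  qed
qed

theorem proposition2p5:
  fixes f :: "nat \<Rightarrow> real \<Rightarrow> real" and finf :: "real \<Rightarrow> real"
  assumes "in_class_F f finf"
  shows "(\<forall>t\<in>{0..1}. continuous (at t within {0..1}) finf \<and> finf t \<noteq> 0 \<longrightarrow>
            \<not> (x_f f) differentiable (at t within {0..1}))
       \<and> (AE t in lebesgue. t \<in> {0..1} \<and> finf t \<noteq> 0 \<longrightarrow>
            \<not> (x_f f) differentiable (at t within {0..1}))"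
proof
  show everywhere: "\<forall>t\<in>{0..1}. continuous (at t within {0..1}) finf \<and> finf t \<noteq> 0 \<longrightarrow>
      \<not> (x_f f) differentiable (at t within {0..1})"
    using x_f_not_differentiable_at[OF assms] by blast
  have "{t\<in>{0..1}. \<not> continuous (at t within {0..1}) finf} \<in> null_sets lebesgue"
    using assms riemann_integrable_discontinuities_negligible
    by (simp add: in_class_F_def negligible_iff_null_sets)
  then show "AE t in lebesgue. t \<in> {0..1} \<and> finf t \<noteq> 0 \<longrightarrow>
      \<not> (x_f f) differentiable (at t within {0..1})"
    by (rule AE_I') (use everywhere in auto)
qed

end
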